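(* Let $E$ be a real topological vector space, $f:E\to\mathbb{R}$ and $x\in E$. If $f$ is $D^-_M$-differentiable at $x$, then $D^-_Mf(x):E\to\mathbb{R}$ is a superlinear functional, and $D^-f(x)$ is superlinear if and only if $D^-f(x)=D^-_Mf(x)$. Similarly, if $f$ is $D^+_M$-differentiable at $x$, then $D^+_Mf(x)$ is a sublinear functional, and $D^+f(x)$ is sublinear if and only if $D^+f(x)=D^+_Mf(x)$.
   Context: $D^-f(x)(u):=\liminf_{t\to0^+}\frac{f(x+tu)-f(x)}{t}$ and $D^+f(x)(u):=\limsup_{t\to0^+}\frac{f(x+tu)-f(x)}{t}$, with $D^-f(x)(0)=D^+f(x)(0)=0$. $D^-_Mf(x)(u):=\inf_{w\in E}\{D^-f(x)(u+w)-D^-f(x)(w)\}$ and $D^+_Mf(x)(u):=\sup_{w\in E}\{D^+f(x)(u+w)-D^+f(x)(w)\}$. $f$ is $D^-_M$-differentiable (resp. $D^+_M$-differentiable) at $x$ if $D^-_Mf(x)(u)$ and $D^-f(x)(u)$ (resp. $D^+_Mf(x)(u)$ and $D^+f(x)(u)$) are finite for all $u\in E$. A map $p:E\to\mathbb{R}$ is sublinear if $p(x+y)\le p(x)+p(y)$ and $p(\lambda x)=\lambda p(x)$ for all $x,y\in E$, $\lambda\ge0$; superlinear if $-p$ is sublinear. *)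

theory Defs
  imports "HOL-Analysis.Analysis"
begin

definition tvs :: "('a::{real_vector,topological_space}) itself \<Rightarrow> bool" where
  "tvs _ \<longleftrightarrow> continuous_on UNIV (\<lambda>(x::'a, y::'a). x + y)
            \<and> continuous_on UNIV (\<lambda>(c::real, x::'a). c *\<^sub>R x)"

definition Dlow :: "('a::real_vector \<Rightarrow> real) \<Rightarrow> 'a \<Rightarrow> 'a \<Rightarrow> ereal" where
  "Dlow f x u = (if u = 0 then 0 else
     Liminf (at_right (0::real)) (\<lambda>t. ereal ((f (x + t *\<^sub>R u) - f x) / t)))"

definition Dup :: "('a::real_vector \<Rightarrow> real) \<Rightarrow> 'a \<Rightarrow> 'a \<Rightarrow> ereal" where
  "Dup f x u = (if u = 0 then 0 else
     Limsup (at_right (0::real)) (\<lambda>t. ereal ((f (x + t *\<^sub>R u) - f x) / t)))"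

definition DMlow :: "('a::real_vector \<Rightarrow> real) \<Rightarrow> 'a \<Rightarrow> 'a \<Rightarrow> ereal" where
  "DMlow f x u = (INF w. Dlow f x (u + w) - Dlow f x w)"

definition DMup :: "('a::real_vector \<Rightarrow> real) \<Rightarrow> 'a \<Rightarrow> 'a \<Rightarrow> ereal" where
  "DMup f x u = (SUP w. Dup f x (u + w) - Dup f x w)"

definition DMlow_differentiable :: "('a::real_vector \<Rightarrow> real) \<Rightarrow> 'a \<Rightarrow> bool" where
  "DMlow_differentiable f x \<longleftrightarrow> (\<forall>u. \<bar>DMlow f x u\<bar> \<noteq> \<infinity> \<and> \<bar>Dlow f x u\<bar> \<noteq> \<infinity>)"

definition DMup_differentiable :: "('a::real_vector \<Rightarrow> real) \<Rightarrow> 'a \<Rightarrow> bool" where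
  "DMup_differentiable f x \<longleftrightarrow> (\<forall>u. \<bar>DMup f x u\<bar> \<noteq> \<infinity> \<and> \<bar>Dup f x u\<bar> \<noteq> \<infinity>)"

definition sublinear :: "('a::real_vector \<Rightarrow> real) \<Rightarrow> bool" where
  "sublinear p \<longleftrightarrow> (\<forall>x y. p (x + y) \<le> p x + p y) \<and> (\<forall>x (l::real). l \<ge> 0 \<longrightarrow> p (l *\<^sub>R x) = l * p x)"

definition superlinear :: "('a::real_vector \<Rightarrow> real) \<Rightarrow> bool" where
  "superlinear p \<longleftrightarrow> sublinear (\<lambda>x. - p x)"

end

theory Submission
  imports Defs
begin

text \<open>
  Write \<open>g = D\<^sup>-f(x)\<close>. The Michel--Penot derivative \<open>H u = inf\<^sub>w (g (u + w) - g w)\<close> is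
  superadditive because increments telescope,
  \<open>g (u + v + w) - g w = (g (u + (v + w)) - g (v + w)) + (g (v + w) - g w)\<close>,
  and positively homogeneous because \<open>g\<close> is (substitute \<open>w \<mapsto> l w\<close> in the infimum).
  Since \<open>g 0 = 0\<close>, taking \<open>w = 0\<close> gives \<open>H \<le> g\<close>, while superadditivity of \<open>g\<close> says exactly
  that every increment dominates \<open>g u\<close>, i.e. \<open>g \<le> H\<close>. The upper case is the lower one
  applied to \<open>-f\<close>, as \<open>D\<^sup>+f(x) = - D\<^sup>-(-f)(x)\<close>.
\<close>

context
  fixes g H :: "'a::real_vector \<Rightarrow> real"
  assumes homogeneous: "\<And>c u. c > 0 \<Longrightarrow> g (c *\<^sub>R u) = c * g u"
    and zero: "g 0 = 0"
    and lower_bound: "\<And>u w. H u \<le> g (u + w) - g w"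
    and greatest: "\<And>u r. (\<And>w. r \<le> g (u + w) - g w) \<Longrightarrow> r \<le> H u"
begin

lemma inf_increment_superadditive: "H u + H v \<le> H (u + v)"
proof (rule greatest)
  fix w
  have "H u \<le> g (u + (v + w)) - g (v + w)" and "H v \<le> g (v + w) - g w"
    by (rule lower_bound)+
  then show "H u + H v \<le> g (u + v + w) - g w"
    by (simp add: add.assoc)
qed

lemma inf_increment_scaleR_pos:
  assumes l: "l > 0"
  shows "H (l *\<^sub>R u) = l * H u"
proof (rule antisym)
  have "H (l *\<^sub>R u) / l \<le> H u"
  proof (rule greatest)
    fix w
    have "H (l *\<^sub>R u) \<le> g (l *\<^sub>R u + l *\<^sub>R w) - g (l *\<^sub>R w)"
      by (rule lower_bound)
    also have "\<dots> = l * (g (u + w) - g w)"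
      using homogeneous[OF l, of "u + w"] homogeneous[OF l, of w]
      by (simp add: scaleR_right_distrib right_diff_distrib)
    finally show "H (l *\<^sub>R u) / l \<le> g (u + w) - g w"
      using l by (simp add: divide_le_eq mult.commute)
  qed
  then show "H (l *\<^sub>R u) \<le> l * H u"
    using l by (simp add: divide_le_eq mult.commute)
next
  show "l * H u \<le> H (l *\<^sub>R u)"
  proof (rule greatest)
    fix w
    have "l * H u \<le> l * (g (u + w /\<^sub>R l) - g (w /\<^sub>R l))"
      using l lower_bound by simp
    also have "\<dots> = g (l *\<^sub>R (u + w /\<^sub>R l)) - g (l *\<^sub>R (w /\<^sub>R l))"
      using homogeneous[OF l, of "u + w /\<^sub>R l"] homogeneous[OF l, of "w /\<^sub>R l"]
      by (simp add: right_diff_distrib)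
    also have "\<dots> = g (l *\<^sub>R u + w) - g w"
      using l by (simp add: scaleR_right_distrib)
    finally show "l * H u \<le> g (l *\<^sub>R u + w) - g w" .
  qed
qed

lemma inf_increment_zero: "H 0 = 0"
  using lower_bound[of 0 0] greatest[of 0 0] by simp

lemma inf_increment_superlinear: "superlinear H"
  unfolding superlinear_def sublinear_def
proof (intro conjI allI impI)
  show "- H (u + v) \<le> - H u + - H v" for u v
    using inf_increment_superadditive[of u v] by simp
  show "- H (l *\<^sub>R u) = l * - H u" if "0 \<le> l" for l u
    using that inf_increment_scaleR_pos[of l u] inf_increment_zero
    by (cases "l = 0") simp_all
qed

lemma superlinear_iff_eq_inf_increment: "superlinear g \<longleftrightarrow> g = H"
proof
  assume "superlinear g"
  then have subadditive_neg: "- g (u + w) \<le> - g u + - g w" for u w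
    unfolding superlinear_def sublinear_def by blast
  have superadditive: "g u + g w \<le> g (u + w)" for u w
    using subadditive_neg[of u w] by linarith
  show "g = H"
  proof
    fix u
    show "g u = H u"
      using lower_bound[of u 0] zero greatest[of "g u" u] superadditive
      by (force simp: algebra_simps)
  qed
qed (use inf_increment_superlinear in simp)

end

lemma Dlow_scaleR_pos:
  assumes c: "c > 0"
  shows "Dlow f x (c *\<^sub>R u) = ereal c * Dlow f x u"
proof (cases "u = 0")
  case True
  then show ?thesis by (simp add: Dlow_def)
next
  case False
  define q where "q = (\<lambda>s. ereal ((f (x + s *\<^sub>R u) - f x) / s))"
  have rescale: "(\<lambda>t. ereal ((f (x + t *\<^sub>R (c *\<^sub>R u)) - f x) / t)) = (\<lambda>t. ereal c * q (c * t))"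
  proof
    show "ereal ((f (x + t *\<^sub>R (c *\<^sub>R u)) - f x) / t) = ereal c * q (c * t)" for t
      using c by (cases "t = 0") (simp_all add: q_def field_simps)
  qed
  have "Liminf (at_right 0) (\<lambda>t. ereal c * q (c * t)) = ereal c * Liminf (at_right 0) (\<lambda>t. q (c * t))"
    using c by (intro Liminf_ereal_mult_left) simp_all
  also have "Liminf (at_right 0) (\<lambda>t. q (c * t)) = Liminf (filtermap (times c) (at_right 0)) q"
    using c by (intro Liminf_filtermap_eq[symmetric]) (simp add: inj_on_def)
  also have "filtermap (times c) (at_right 0) = at_right (0::real)"
    using filtermap_times_pos_at_right[OF c, of 0] by simp
  finally show ?thesis
    using False c rescale by (simp add: Dlow_def q_def)
qed

lemma Dup_eq_uminus_Dlow_uminus: "Dup f x u = - Dlow (\<lambda>y. - f y) x u"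
proof -
  have "(\<lambda>t. ereal ((- f (x + t *\<^sub>R u) - - f x) / t)) = (\<lambda>t. - ereal ((f (x + t *\<^sub>R u) - f x) / t))"
    by (simp add: fun_eq_iff minus_divide_left)
  then show ?thesis
    unfolding Dup_def Dlow_def by (simp only: ereal_Liminf_uminus) simp
qed

text \<open>Finiteness is needed: \<open>ereal\<close> subtraction has \<open>\<infinity> - \<infinity> = \<infinity>\<close>, so it does not commute
  with negation at infinite arguments.\<close>

lemma DMup_eq_uminus_DMlow_uminus:
  assumes "\<And>u. \<bar>Dup f x u\<bar> \<noteq> \<infinity>"
  shows "DMup f x u = - DMlow (\<lambda>y. - f y) x u"
proof -
  have "Dup f x (u + w) - Dup f x w = - (Dlow (\<lambda>y. - f y) x (u + w) - Dlow (\<lambda>y. - f y) x w)" for w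
    using assms[of "u + w"] assms[of w] unfolding Dup_eq_uminus_Dlow_uminus
    by (cases "Dlow (\<lambda>y. - f y) x (u + w)"; cases "Dlow (\<lambda>y. - f y) x w") simp_all
  then show ?thesis
    by (simp add: DMup_def DMlow_def ereal_SUP_uminus_eq)
qed

lemma DMlow_superlinear:
  assumes "DMlow_differentiable f x"
  shows "superlinear (\<lambda>u. real_of_ereal (DMlow f x u))"
    and "superlinear (\<lambda>u. real_of_ereal (Dlow f x u)) \<longleftrightarrow> (\<forall>u. Dlow f x u = DMlow f x u)"
proof -
  define g where "g u = real_of_ereal (Dlow f x u)" for u
  define H where "H u = real_of_ereal (DMlow f x u)" for u
  have Dlow_g: "Dlow f x u = ereal (g u)" and DMlow_H: "DMlow f x u = ereal (H u)" for u
    using assms unfolding DMlow_differentiable_def g_def H_def by (metis ereal_real')+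
  have lower_bound: "H u \<le> g (u + w) - g w" for u w
  proof -
    have "DMlow f x u \<le> Dlow f x (u + w) - Dlow f x w"
      unfolding DMlow_def by (rule INF_lower) simp
    then show ?thesis by (simp add: Dlow_g DMlow_H)
  qed
  have greatest: "r \<le> H u" if "\<And>w. r \<le> g (u + w) - g w" for u r
  proof -
    have "ereal r \<le> DMlow f x u"
      unfolding DMlow_def by (rule INF_greatest) (use that in \<open>simp add: Dlow_g\<close>)
    then show ?thesis by (simp add: DMlow_H)
  qed
  have homogeneous: "g (c *\<^sub>R u) = c * g u" if "c > 0" for c u
    using Dlow_scaleR_pos[OF that, of f x u] by (simp add: Dlow_g)
  have zero: "g 0 = 0"
    by (simp add: g_def Dlow_def)
  show "superlinear (\<lambda>u. real_of_ereal (DMlow f x u))"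
    using inf_increment_superlinear[OF homogeneous zero lower_bound greatest]
    by (simp add: H_def[abs_def])
  show "superlinear (\<lambda>u. real_of_ereal (Dlow f x u)) \<longleftrightarrow> (\<forall>u. Dlow f x u = DMlow f x u)"
    using superlinear_iff_eq_inf_increment[OF homogeneous zero lower_bound greatest]
    by (simp add: g_def[abs_def, symmetric] Dlow_g DMlow_H fun_eq_iff)
qed

lemma DMup_sublinear:
  assumes "DMup_differentiable f x"
  shows "sublinear (\<lambda>u. real_of_ereal (DMup f x u))"
    and "sublinear (\<lambda>u. real_of_ereal (Dup f x u)) \<longleftrightarrow> (\<forall>u. Dup f x u = DMup f x u)"
proof -
  have Dup_finite: "\<bar>Dup f x u\<bar> \<noteq> \<infinity>" for u
    using assms by (simp add: DMup_differentiable_def)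
  note dual = Dup_eq_uminus_Dlow_uminus[of f x] DMup_eq_uminus_DMlow_uminus[OF Dup_finite]
  have "DMlow_differentiable (\<lambda>y. - f y) x"
    using assms by (simp add: DMup_differentiable_def DMlow_differentiable_def dual)
  from DMlow_superlinear[OF this] show
    "sublinear (\<lambda>u. real_of_ereal (DMup f x u))"
    "sublinear (\<lambda>u. real_of_ereal (Dup f x u)) \<longleftrightarrow> (\<forall>u. Dup f x u = DMup f x u)"
    by (simp_all add: superlinear_def dual)
qed

theorem proposition2p2:
  fixes f :: "'a::{real_vector,topological_space} \<Rightarrow> real" and x :: 'a
  assumes "tvs TYPE('a)"
  shows "(DMlow_differentiable f x \<longrightarrow>
            superlinear (\<lambda>u. real_of_ereal (DMlow f x u)) \<and>
            (superlinear (\<lambda>u. real_of_ereal (Dlow f x u)) \<longleftrightarrow> (\<forall>u. Dlow f x u = DMlow f x u)))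
       \<and> (DMup_differentiable f x \<longrightarrow>
            sublinear (\<lambda>u. real_of_ereal (DMup f x u)) \<and>
            (sublinear (\<lambda>u. real_of_ereal (Dup f x u)) \<longleftrightarrow> (\<forall>u. Dup f x u = DMup f x u)))"
  using DMlow_superlinear[of f x] DMup_sublinear[of f x] by blast

end
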